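(* Let $S_1=(x_1,y_1),S_2=(x_2,y_2),S_3=(x_3,y_3),S_4=(x_4,y_4)$ be four points in the plane with $x_1\le x_2\le x_3\le x_4$. Let $\delta_1,\delta_2,\delta_3,\delta_4$ be positive integers, where $\delta_j$ is the number of times $S_j$ occurs in the data. For $i\in\{1,\dots,4\}$ define the pivot point $P_i=(\tilde x_i,\tilde y_i)$ by $$\tilde x_i=x_i+\frac{\sum_{j=1}^4\delta_j(x_j-x_i)^2}{\sum_{j=1}^4\delta_j(x_j-x_i)},\qquad \tilde y_i=y_i+\frac{\sum_{j=1}^4\delta_j(x_j-x_i)(y_j-y_i)}{\sum_{j=1}^4\delta_j(x_j-x_i)},$$ whenever the denominator is nonzero. Then, whenever defined, $P_4$ lies in the closed triangle (convex hull) with vertices $S_1,S_2,S_3$, and $P_1$ lies in the closed triangle (convex hull) with vertices $S_2,S_3,S_4$. That is, the pivot points of an outermost point on the $x$-axis lie in the triangle formed by the other three points.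
   Context: The pivot point $P_i$ is the point through which the least-squares regression line of the data, in which each $S_j$ appears $\delta_j$ times, always passes regardless of how many additional copies of $S_i$ are added. It is considered undefined (at infinity) when $\sum_j\delta_j(x_j-x_i)=0$. *)

theory Defs
  imports "HOL-Analysis.Analysis"
begin

definition pivot_denom :: "(nat \<Rightarrow> real) \<Rightarrow> (nat \<Rightarrow> nat) \<Rightarrow> nat \<Rightarrow> real" where
  "pivot_denom x d i = (\<Sum>j=1..4. real (d j) * (x j - x i))"

definition pivot :: "(nat \<Rightarrow> real) \<Rightarrow> (nat \<Rightarrow> real) \<Rightarrow> (nat \<Rightarrow> nat) \<Rightarrow> nat \<Rightarrow> real \<times> real" where
  "pivot x y d i =
     (x i + (\<Sum>j=1..4. real (d j) * (x j - x i)^2) / pivot_denom x d i,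
      y i + (\<Sum>j=1..4. real (d j) * (x j - x i) * (y j - y i)) / pivot_denom x d i)"

end

theory Submission
  imports Defs
begin

(* With the weights w_j = d_j (x_j - x_i), the pivot P_i is the weighted mean
   (sum_j w_j S_j) / (sum_j w_j); the weight of S_i itself vanishes.  When S_i is
   extreme in the x-direction all weights have the same sign, so the mean is a
   convex combination of the other three points. *)

lemma weighted_mean_in_convex_hull:
  fixes p :: "'i \<Rightarrow> 'a::real_vector" and w :: "'i \<Rightarrow> real"
  assumes "finite I" and "sum w I \<noteq> 0"
    and same_sign: "(\<forall>j\<in>I. 0 \<le> w j) \<or> (\<forall>j\<in>I. w j \<le> 0)"
  shows "(\<Sum>j\<in>I. (w j / sum w I) *\<^sub>R p j) \<in> convex hull (p ` I)"
proof (rule convex_sum)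
  show "(\<Sum>j\<in>I. w j / sum w I) = 1"
    using \<open>sum w I \<noteq> 0\<close> by (simp add: sum_divide_distrib[symmetric])
  show "0 \<le> w j / sum w I" if "j \<in> I" for j
    using same_sign that
    by (auto intro: divide_nonneg_nonneg divide_nonpos_nonpos sum_nonneg sum_nonpos)
qed (use \<open>finite I\<close> in \<open>auto intro: hull_inc\<close>)

lemma weighted_mean_shift:
  fixes w z :: "'i \<Rightarrow> real"
  assumes "sum w A \<noteq> 0"
  shows "c + (\<Sum>j\<in>A. w j * (z j - c)) / sum w A = (\<Sum>j\<in>A. w j * z j) / sum w A"
  using assms
  by (simp add: right_diff_distrib sum_subtractf sum_distrib_left sum_distrib_right[symmetric] field_simps)

definition pivot_weight :: "(nat \<Rightarrow> real) \<Rightarrow> (nat \<Rightarrow> nat) \<Rightarrow> nat \<Rightarrow> nat \<Rightarrow> real" where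
  "pivot_weight x d i j = real (d j) * (x j - x i)"

lemma pivot_denom_eq_sum_weights:
  "pivot_denom x d i = sum (pivot_weight x d i) ({1..4} - {i})"
  by (simp add: pivot_denom_def pivot_weight_def sum_diff1)

lemma pivot_eq_weighted_mean:
  assumes "pivot_denom x d i \<noteq> 0"
  shows "pivot x y d i = (\<Sum>j\<in>{1..4} - {i}.
           (pivot_weight x d i j / sum (pivot_weight x d i) ({1..4} - {i})) *\<^sub>R (x j, y j))"
proof -
  let ?w = "pivot_weight x d i"
  have denom: "pivot_denom x d i = sum ?w {1..4}"
    by (simp add: pivot_denom_def pivot_weight_def)
  have "pivot x y d i =
      ((\<Sum>j=1..4. ?w j * x j) / sum ?w {1..4}, (\<Sum>j=1..4. ?w j * y j) / sum ?w {1..4})"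
    using weighted_mean_shift[of ?w "{1..4}" "x i" x] weighted_mean_shift[of ?w "{1..4}" "y i" y] assms
    by (simp add: pivot_def denom pivot_weight_def power2_eq_square mult.assoc)
  also have "\<dots> = (\<Sum>j=1..4. (?w j / sum ?w {1..4}) *\<^sub>R (x j, y j))"
    by (simp add: prod_eq_iff fst_sum snd_sum sum_divide_distrib)
  also have "\<dots> = (\<Sum>j\<in>{1..4} - {i}. (?w j / sum ?w ({1..4} - {i})) *\<^sub>R (x j, y j))"
    \<comment> \<open>the weight of \<open>S\<^sub>i\<close> itself is zero\<close>
    by (simp add: sum_diff1 pivot_weight_def zero_prod_def)
  finally show ?thesis .
qed

lemma pivot_in_convex_hull_others:
  assumes "pivot_denom x d i \<noteq> 0"
    and extreme: "(\<forall>j\<in>{1..4}. x j \<le> x i) \<or> (\<forall>j\<in>{1..4}. x i \<le> x j)"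
  shows "pivot x y d i \<in> convex hull ((\<lambda>j. (x j, y j)) ` ({1..4} - {i}))"
proof -
  have "(\<forall>j\<in>{1..4} - {i}. 0 \<le> pivot_weight x d i j)
      \<or> (\<forall>j\<in>{1..4} - {i}. pivot_weight x d i j \<le> 0)"
    using extreme by (auto simp: pivot_weight_def mult_nonneg_nonpos)
  then show ?thesis
    using weighted_mean_in_convex_hull[of "{1..4} - {i}" "pivot_weight x d i" "\<lambda>j. (x j, y j)"]
      assms(1) pivot_eq_weighted_mean[OF assms(1)] pivot_denom_eq_sum_weights[of x d i]
    by simp
qed

theorem proposition2:
  fixes x y :: "nat \<Rightarrow> real" and d :: "nat \<Rightarrow> nat"
  assumes "x 1 \<le> x 2" "x 2 \<le> x 3" "x 3 \<le> x 4"
    and "\<And>j. j \<in> {1..4} \<Longrightarrow> d j > 0"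
  shows "(pivot_denom x d 4 \<noteq> 0 \<longrightarrow>
            pivot x y d 4 \<in> convex hull {(x 1, y 1), (x 2, y 2), (x 3, y 3)})
       \<and> (pivot_denom x d 1 \<noteq> 0 \<longrightarrow>
            pivot x y d 1 \<in> convex hull {(x 2, y 2), (x 3, y 3), (x 4, y 4)})"
proof -
  have indices: "{1..4::nat} = {1, 2, 3, 4}"
    by (auto simp: eval_nat_numeral)
  have "\<forall>j\<in>{1..4}. x j \<le> x 4" and "\<forall>j\<in>{1..4}. x 1 \<le> x j"
    unfolding indices using assms(1-3) by auto
  moreover have "{1..4::nat} - {4} = {1, 2, 3}" and "{1..4::nat} - {1} = {2, 3, 4}"
    by (auto simp: indices)
  ultimately show ?thesis
    using pivot_in_convex_hull_others[of x d 4 y] pivot_in_convex_hull_others[of x d 1 y]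
    by auto
qed

end
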